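(* Let $G$ be a directed graph in which every vertex is reachable from a vertex $s$, let $t$ be a vertex of $G$, and let $k\ge 1$ be an integer. Assume that for no $\ell\in\{k,\dots,2k-1\}$ does $G$ contain an $(s,t)$-path of length exactly $dist_G(s,t)+\ell$, and that $G$ contains an $(s,t)$-path of length at least $dist_G(s,t)+k$; let $P$ be such a path of minimum length. For $i\ge0$ let $L_i$ be the set of vertices at distance exactly $i$ from $s$. Let $p$ be the smallest integer $i\ge1$ such that $L_i$ contains more than one vertex of $P$, and let $u,v$ be the first and second vertices of $P$ (in order along $P$) lying in $L_p$. Let $x$ be the vertex of $P_{u,v}$ such that $P_{u,x}$ has length exactly $k$ (the path $P_{u,v}$ has more than $k$ edges). Let $k'=\min\{k+1,|V(P_{x,v})|\}$ and let $y$ be the first vertex of the subpath of $P_{u,v}$ formed by its last $k'$ vertices. Let $k''=\min\{2k+1,|V(P_{v,t})|\}$ and let $z$ be the last vertex of the subpath of $P_{v,t}$ formed by its first $k''$ vertices. Then every path $P'$ from $u$ to $x$ of length at most $k$ in the induced subgraph $G[\bigcup_{i\ge p}L_i]$ that is vertex disjoint from $P_{y,z}$ is vertex disjoint from $P_{x,v}$ except at the vertex $x$.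
   Context: Paths are simple directed paths; the length of a path is its number of edges. $dist_G(a,b)$ denotes the length of a shortest directed $(a,b)$-path in $G$. For a path $P$ and vertices $a,b$ on it (with $a$ before $b$), $P_{a,b}$ denotes the subpath of $P$ from $a$ to $b$. *)

theory Defs
  imports Main
begin

definition is_path :: "'a set \<Rightarrow> ('a \<times> 'a) set \<Rightarrow> 'a list \<Rightarrow> bool" where
  "is_path V E q \<longleftrightarrow> q \<noteq> [] \<and> distinct q \<and> set q \<subseteq> V \<and>
     (\<forall>i. Suc i < length q \<longrightarrow> (q ! i, q ! Suc i) \<in> E)"

definition path_len :: "'a list \<Rightarrow> nat" where
  "path_len q = length q - 1"

definition st_path :: "'a set \<Rightarrow> ('a \<times> 'a) set \<Rightarrow> 'a \<Rightarrow> 'a \<Rightarrow> 'a list \<Rightarrow> bool" where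
  "st_path V E a b q \<longleftrightarrow> is_path V E q \<and> hd q = a \<and> last q = b"

definition dist :: "'a set \<Rightarrow> ('a \<times> 'a) set \<Rightarrow> 'a \<Rightarrow> 'a \<Rightarrow> nat" where
  "dist V E a b = (LEAST n. \<exists>q. st_path V E a b q \<and> path_len q = n)"

definition level :: "'a set \<Rightarrow> ('a \<times> 'a) set \<Rightarrow> 'a \<Rightarrow> nat \<Rightarrow> 'a set" where
  "level V E s i = {w \<in> V. dist V E s w = i}"

definition subpath :: "'a list \<Rightarrow> nat \<Rightarrow> nat \<Rightarrow> 'a list" where
  "subpath q i j = drop i (take (Suc j) q)"

definition induced_edges :: "('a \<times> 'a) set \<Rightarrow> 'a set \<Rightarrow> ('a \<times> 'a) set" where
  "induced_edges E S = {(a, b) \<in> E. a \<in> S \<and> b \<in> S}"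

end

(* Let p be the first level that meets P twice and write v = P ! iv for its second vertex.
   Up to P ! p the path P is a shortest path, and P meets each level below p only once.  Hence a
   shortest path to v followed by P after v is an s-t path; minimality of P forces it to be
   shorter than dist s t + k, while it is at least dist s t long.
   If P' meets P after x, let P ! j be the first such vertex along P'.  Following P to u, then
   P' to P ! j, then P to t gives an s-t path of length less than p + k + |P after j|.  If j lies
   more than 2k beyond v, this path is shorter than dist s t; if j lies more than k before v, it is
   shorter than P but has length at least dist s t + k.  So P ! j lies on P_{y,z}, which P' avoids. *)

theory Submission
  imports Defs
begin

lemma is_path_append:
  assumes "is_path V E xs" "is_path V E ys" "set xs \<inter> set ys = {}" "(last xs, hd ys) \<in> E"
  shows "is_path V E (xs @ ys)"
proof -
  have ne: "xs \<noteq> []" "ys \<noteq> []" using assms(1,2) by (auto simp: is_path_def)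
  have "((xs @ ys) ! i, (xs @ ys) ! Suc i) \<in> E" if i: "Suc i < length (xs @ ys)" for i
  proof -
    consider "Suc i < length xs" | "Suc i = length xs" | "length xs \<le> i" by linarith
    then show ?thesis
    proof cases
      case 1
      then show ?thesis using assms(1) by (simp add: nth_append is_path_def)
    next
      case 2
      then have "(xs @ ys) ! i = last xs" "(xs @ ys) ! Suc i = hd ys"
        using ne by (simp_all add: nth_append last_conv_nth hd_conv_nth flip: 2)
      then show ?thesis using assms(4) by simp
    next
      case 3
      then have "(xs @ ys) ! i = ys ! (i - length xs)" "(xs @ ys) ! Suc i = ys ! Suc (i - length xs)"
        by (simp_all add: nth_append Suc_diff_le)
      moreover have "Suc (i - length xs) < length ys" using i 3 by simp
      ultimately show ?thesis using assms(2) by (simp add: is_path_def)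
    qed
  qed
  then show ?thesis using assms ne unfolding is_path_def by auto
qed

lemma is_path_take: "is_path V E q \<Longrightarrow> 0 < n \<Longrightarrow> is_path V E (take n q)"
  unfolding is_path_def by (auto dest: in_set_takeD)

lemma is_path_drop: "is_path V E q \<Longrightarrow> n < length q \<Longrightarrow> is_path V E (drop n q)"
  unfolding is_path_def by (auto dest: in_set_dropD)

lemma is_path_mono: "is_path V' E' q \<Longrightarrow> V' \<subseteq> V \<Longrightarrow> E' \<subseteq> E \<Longrightarrow> is_path V E q"
  unfolding is_path_def by blast

lemma in_set_subpath:
  assumes "j < length q"
  shows "w \<in> set (subpath q i j) \<longleftrightarrow> (\<exists>n. i \<le> n \<and> n \<le> j \<and> w = q ! n)"
proof
  assume "w \<in> set (subpath q i j)"
  then obtain n where "n < length (subpath q i j)" "w = subpath q i j ! n"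
    by (auto simp: in_set_conv_nth)
  with assms show "\<exists>n. i \<le> n \<and> n \<le> j \<and> w = q ! n"
    by (intro exI[of _ "i + n"]) (auto simp: subpath_def)
next
  assume "\<exists>n. i \<le> n \<and> n \<le> j \<and> w = q ! n"
  then obtain n where n: "i \<le> n" "n \<le> j" "w = q ! n" by blast
  with assms have "subpath q i j ! (n - i) = w" "n - i < length (subpath q i j)"
    by (auto simp: subpath_def)
  then show "w \<in> set (subpath q i j)" by (metis nth_mem)
qed

lemma length_subpath: "j < length q \<Longrightarrow> length (subpath q i j) = Suc j - i"
  by (simp add: subpath_def)

lemma nth_in_subpath_window:
  assumes "iv < length P" "ix < j" "iv - k \<le> j" "j \<le> iv + 2 * k" "j < length P"
  shows "P ! j \<in> set (subpath P (Suc iv - min (k + 1) (length (subpath P ix iv)))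
                          (iv + min (2 * k + 1) (length (subpath P iv (length P - 1))) - 1))"
proof -
  have "length (subpath P ix iv) = Suc iv - ix" "length (subpath P iv (length P - 1)) = length P - iv"
    using assms(1) length_subpath[of iv P ix] length_subpath[of "length P - 1" P iv] by simp_all
  then show ?thesis
    using assms by (subst in_set_subpath) (auto intro!: exI[of _ j] simp: min_def)
qed

lemma path_len_append: "xs \<noteq> [] \<Longrightarrow> path_len (xs @ ys) = path_len xs + length ys"
  by (cases xs) (simp_all add: path_len_def)

lemma st_path_take:
  assumes "st_path V E a b q" "i < length q"
  shows "st_path V E a (q ! i) (take (Suc i) q)" "path_len (take (Suc i) q) = i"
proof -
  have "hd (take (Suc i) q) = hd q" "last (take (Suc i) q) = q ! i"
    using assms(2) by (simp add: hd_conv_nth, simp add: take_Suc_conv_app_nth)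
  then show "st_path V E a (q ! i) (take (Suc i) q)"
    using assms is_path_take[of V E q "Suc i"] by (simp add: st_path_def)
  show "path_len (take (Suc i) q) = i" using assms(2) by (simp add: path_len_def)
qed

lemma dist_le_path_len: "st_path V E a b q \<Longrightarrow> dist V E a b \<le> path_len q"
  unfolding dist_def by (rule Least_le) auto

lemma dist_attained:
  assumes "\<exists>q. st_path V E a b q"
  obtains q where "st_path V E a b q" "path_len q = dist V E a b"
  using LeastI_ex[of "\<lambda>n. \<exists>q. st_path V E a b q \<and> path_len q = n"] assms
  unfolding dist_def by blast

lemma dist_nth_le: "st_path V E a b q \<Longrightarrow> i < length q \<Longrightarrow> dist V E a (q ! i) \<le> i"
  using st_path_take dist_le_path_len by metis

lemma dist_self: "a \<in> V \<Longrightarrow> dist V E a a = 0"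
  using dist_le_path_len[of V E a a "[a]"] by (simp add: st_path_def is_path_def path_len_def)

lemma dist_eq_0_imp_eq:
  assumes "\<exists>q. st_path V E a b q" "dist V E a b = 0"
  shows "b = a"
proof -
  obtain q where "st_path V E a b q" "path_len q = 0"
    using dist_attained[OF assms(1)] assms(2) by metis
  then show ?thesis by (cases q) (auto simp: path_len_def st_path_def is_path_def)
qed

lemma dist_edge_le:
  assumes "(x, y) \<in> E" "y \<in> V" "\<exists>q. st_path V E a x q"
  shows "dist V E a y \<le> Suc (dist V E a x)"
proof -
  obtain q where q: "st_path V E a x q" "path_len q = dist V E a x"
    using dist_attained[OF assms(3)] by blast
  show ?thesis
  proof (cases "y \<in> set q")
    case True
    then obtain i where "i < length q" "y = q ! i" by (auto simp: in_set_conv_nth)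
    then show ?thesis using dist_nth_le[OF q(1)] q(2) by (fastforce simp: path_len_def)
  next
    case False
    have "is_path V E (q @ [y])"
      using q assms(1,2) False by (intro is_path_append) (auto simp: st_path_def is_path_def)
    then have "st_path V E a y (q @ [y])" using q by (auto simp: st_path_def is_path_def)
    then have "dist V E a y \<le> path_len (q @ [y])" by (rule dist_le_path_len)
    then show ?thesis using q by (auto simp: path_len_append st_path_def is_path_def)
  qed
qed

lemma st_path_replace_prefix:
  assumes P: "st_path V E s t P" and j: "j < length P"
    and A: "st_path V E s (P ! j) A" and disj: "set A \<inter> set (drop (Suc j) P) = {}"
  shows "st_path V E s t (A @ drop (Suc j) P)"
    and "path_len (A @ drop (Suc j) P) = path_len A + (length P - Suc j)"
proof -
  have A_ne: "A \<noteq> []" using A by (simp add: st_path_def is_path_def)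
  show "path_len (A @ drop (Suc j) P) = path_len A + (length P - Suc j)"
    using A_ne by (simp add: path_len_append)
  show "st_path V E s t (A @ drop (Suc j) P)"
  proof (cases "Suc j = length P")
    case True
    then have "P ! j = t" using P by (auto simp: st_path_def last_conv_nth is_path_def simp flip: True)
    then show ?thesis using A True by simp
  next
    case False
    with j have sj: "Suc j < length P" by simp
    have "is_path V E (A @ drop (Suc j) P)"
      using A P disj sj by (intro is_path_append is_path_drop)
        (auto simp: st_path_def is_path_def hd_drop_conv_nth)
    then show ?thesis using A P A_ne sj by (auto simp: st_path_def)
  qed
qed

locale nonshortest_path =
  fixes V :: "'a set" and E :: "('a \<times> 'a) set" and s t :: 'a and P :: "'a list"
  assumes reach: "\<forall>w\<in>V. \<exists>q. st_path V E s w q"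
    and P_path: "st_path V E s t P"
    and P_nonshortest: "dist V E s t < path_len P"
begin

abbreviation depth :: "nat \<Rightarrow> nat" where
  "depth j \<equiv> dist V E s (P ! j)"

definition crowded_level :: nat where
  "crowded_level = (LEAST i. i \<ge> 1 \<and> card (level V E s i \<inter> set P) > 1)"

lemma P_is_path: "is_path V E P"
  using P_path by (simp add: st_path_def)

lemma P_ne: "P \<noteq> []"
  using P_is_path by (simp add: is_path_def)

lemma P_nth_0: "P ! 0 = s"
  using P_path P_ne by (simp add: st_path_def hd_conv_nth)

lemma P_nth_in_V: "j < length P \<Longrightarrow> P ! j \<in> V"
  using P_is_path by (auto simp: is_path_def)

lemma P_edge: "Suc j < length P \<Longrightarrow> (P ! j, P ! Suc j) \<in> E"
  using P_is_path by (simp add: is_path_def)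

lemma P_nth_eq_iff: "i < length P \<Longrightarrow> j < length P \<Longrightarrow> P ! i = P ! j \<longleftrightarrow> i = j"
  using P_is_path by (simp add: is_path_def nth_eq_iff_index_eq)

lemma P_nth_in_level: "j < length P \<Longrightarrow> P ! j \<in> level V E s (depth j)"
  by (simp add: level_def P_nth_in_V)

lemma depth_Suc_le: "Suc j < length P \<Longrightarrow> depth (Suc j) \<le> Suc (depth j)"
  using P_edge reach P_nth_in_V by (intro dist_edge_le) auto

lemma depth_eq_0_iff:
  assumes "j < length P"
  shows "depth j = 0 \<longleftrightarrow> j = 0"
proof
  assume "depth j = 0"
  then have "P ! j = P ! 0"
    using dist_eq_0_imp_eq[of V E s "P ! j"] reach P_nth_in_V assms by (simp add: P_nth_0)
  then show "j = 0" using P_nth_eq_iff assms P_ne by simp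
next
  assume "j = 0"
  then show "depth j = 0" using dist_self[of s V E] P_nth_0 P_nth_in_V P_ne by force
qed

(* The first vertex of P off a shortest path from s lies on the level of an earlier vertex. *)
lemma crowded_level_exists:
  obtains c where "c \<ge> 1" "c < length P" "card (level V E s c \<inter> set P) > 1"
    "\<And>i. i \<le> c \<Longrightarrow> depth i = i"
proof -
  define m where "m = (LEAST j. j < length P \<and> depth j \<noteq> j)"
  have "depth (length P - 1) \<noteq> length P - 1"
    using P_nonshortest P_path P_ne by (simp add: st_path_def last_conv_nth path_len_def)
  then have m: "m < length P" "depth m \<noteq> m"
    using LeastI[of "\<lambda>j. j < length P \<and> depth j \<noteq> j" "length P - 1"] P_ne by (auto simp: m_def)
  have below_m: "depth i = i" if "i < m" for i
    using that m not_less_Least[of i "\<lambda>j. j < length P \<and> depth j \<noteq> j"] by (auto simp: m_def)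
  have "m \<noteq> 0" using m depth_eq_0_iff by auto
  then have "depth m \<le> Suc (depth (m - 1))" using depth_Suc_le[of "m - 1"] m by simp
  then have less: "depth m < m" using below_m[of "m - 1"] m \<open>m \<noteq> 0\<close> by simp
  define c where "c = depth m"
  have "c \<ge> 1" using depth_eq_0_iff[of m] m \<open>m \<noteq> 0\<close> by (simp add: c_def)
  have two: "{P ! c, P ! m} \<subseteq> level V E s c \<inter> set P"
    using P_nth_in_level[of c] P_nth_in_level[of m] below_m[of c] less m by (auto simp: c_def)
  have "P ! c \<noteq> P ! m" using P_nth_eq_iff less m by (simp add: c_def)
  then have "card (level V E s c \<inter> set P) > 1"
    using card_mono[OF _ two] by simp
  then show ?thesis
    using that \<open>c \<ge> 1\<close> less m below_m by (simp add: c_def)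
qed

lemma crowded_level:
  shows crowded_level_ge_1: "crowded_level \<ge> 1"
    and crowded_level_less: "crowded_level < length P"
    and card_crowded_level: "card (level V E s crowded_level \<inter> set P) > 1"
    and depth_le_crowded_level: "i \<le> crowded_level \<Longrightarrow> depth i = i"
proof -
  obtain c where c: "c \<ge> 1" "c < length P" "card (level V E s c \<inter> set P) > 1"
    "\<And>i. i \<le> c \<Longrightarrow> depth i = i"
    using crowded_level_exists by blast
  have "crowded_level \<ge> 1 \<and> card (level V E s crowded_level \<inter> set P) > 1"
    unfolding crowded_level_def by (rule LeastI[of _ c]) (use c in auto)
  moreover have "crowded_level \<le> c"
    unfolding crowded_level_def by (rule Least_le) (use c in auto)
  ultimately show "crowded_level \<ge> 1" "crowded_level < length P"
    "card (level V E s crowded_level \<inter> set P) > 1" "i \<le> crowded_level \<Longrightarrow> depth i = i"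
    using c by auto
qed

lemma index_eq_depth_if_below_crowded_level:
  assumes j: "j < length P" "depth j < crowded_level"
  shows "j = depth j"
proof (cases "depth j = 0")
  case True
  then show ?thesis using depth_eq_0_iff j by simp
next
  case False
  define c where "c = depth j"
  have "card (level V E s c \<inter> set P) \<le> 1"
    using not_less_Least[of c "\<lambda>i. i \<ge> 1 \<and> card (level V E s i \<inter> set P) > 1"] j False
    by (auto simp: c_def crowded_level_def)
  moreover have "c < length P" "depth c = c"
    using j crowded_level_less depth_le_crowded_level by (auto simp: c_def)
  moreover have "P ! c \<in> level V E s c \<inter> set P" "P ! j \<in> level V E s c \<inter> set P"
    using P_nth_in_level[of c] P_nth_in_level[of j] j \<open>c < length P\<close> \<open>depth c = c\<close>
    by (simp_all add: c_def)
  ultimately have "P ! c = P ! j"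
    by (metis List.finite_set card_le_Suc0_iff_eq finite_Int One_nat_def)
  then show ?thesis using P_nth_eq_iff j \<open>c < length P\<close> by (simp add: c_def)
qed

lemma first_index_in_crowded_level:
  "(LEAST j. j < length P \<and> P ! j \<in> level V E s crowded_level) = crowded_level"
proof (rule Least_equality)
  show "crowded_level < length P \<and> P ! crowded_level \<in> level V E s crowded_level"
    using crowded_level_less P_nth_in_level[of crowded_level] depth_le_crowded_level by simp
next
  fix j assume "j < length P \<and> P ! j \<in> level V E s crowded_level"
  then have "depth j = crowded_level" by (simp add: level_def)
  then show "crowded_level \<le> j" using depth_le_crowded_level[of j] by linarith
qed

lemma later_index_in_crowded_level:
  "\<exists>j. crowded_level < j \<and> j < length P \<and> P ! j \<in> level V E s crowded_level"
proof -
  have "\<not> level V E s crowded_level \<inter> set P \<subseteq> {P ! crowded_level}"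
  proof
    assume "level V E s crowded_level \<inter> set P \<subseteq> {P ! crowded_level}"
    then have "card (level V E s crowded_level \<inter> set P) \<le> 1"
      using card_mono[of "{P ! crowded_level}"] by fastforce
    then show False using card_crowded_level by simp
  qed
  then obtain w where "w \<in> level V E s crowded_level" "w \<in> set P" "w \<noteq> P ! crowded_level"
    by blast
  then obtain j where j: "j < length P" "P ! j \<in> level V E s crowded_level" "j \<noteq> crowded_level"
    by (metis in_set_conv_nth)
  moreover have "\<not> j < crowded_level"
  proof
    assume "j < crowded_level"
    then have "depth j = j" using depth_le_crowded_level by simp
    then show False using j(2,3) by (simp add: level_def)
  qed
  ultimately show ?thesis by (intro exI[of _ j]) auto
qed

(* The shortest path to P ! iv stays below the crowded level before its end, whereas P has no
   vertex below that level after index iv. *)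
lemma shortcut_to_crowded_level:
  assumes iv: "crowded_level < iv" "iv < length P" "depth iv = crowded_level"
  shows "\<exists>R. st_path V E s t R \<and> path_len R = crowded_level + (length P - Suc iv)"
proof -
  obtain R where R: "st_path V E s (P ! iv) R" "path_len R = crowded_level"
    using dist_attained[of V E s "P ! iv"] reach P_nth_in_V iv by metis
  have R_len: "length R = Suc crowded_level"
    using R by (cases R) (auto simp: path_len_def st_path_def is_path_def)
  have "set R \<inter> set (drop (Suc iv) P) = {}"
  proof (rule ccontr)
    assume "set R \<inter> set (drop (Suc iv) P) \<noteq> {}"
    then obtain w where w: "w \<in> set R" "w \<in> set (drop (Suc iv) P)" by blast
    from w(1) obtain i where i: "i < length R" "w = R ! i" by (auto simp: in_set_conv_nth)
    from w(2) obtain n where "n < length P - Suc iv" "w = P ! (Suc iv + n)"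
      by (auto simp: in_set_conv_nth)
    then have n: "Suc iv + n < length P" "w = P ! (Suc iv + n)" by simp_all
    show False
    proof (cases "i = crowded_level")
      case True
      have "R \<noteq> []" using R_len by auto
      then have "w = last R"
        using R_len i True by (simp add: last_conv_nth)
      then have "w = P ! iv" using R(1) by (simp add: st_path_def)
      then show False using n P_nth_eq_iff iv by simp
    next
      case False
      then have "depth (Suc iv + n) < crowded_level"
        using dist_nth_le[OF R(1) i(1)] i n R_len by simp
      then show False
        using index_eq_depth_if_below_crowded_level[of "Suc iv + n"] n iv by simp
    qed
  qed
  then show ?thesis
    using st_path_replace_prefix[OF P_path iv(2) R(1)] R(2) by auto
qed

lemma prepend_geodesic_prefix:
  assumes Q: "is_path V E Q" "hd Q = P ! crowded_level"
    and Q_upper: "\<forall>w\<in>set Q. crowded_level \<le> dist V E s w"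
  shows "st_path V E s (last Q) (take crowded_level P @ Q)"
proof -
  let ?p = crowded_level
  have "take ?p P = take (?p - 1) P @ [P ! (?p - 1)]"
    using take_Suc_conv_app_nth[of "?p - 1" P] crowded_level_ge_1 crowded_level_less by simp
  then have pre: "is_path V E (take ?p P)" "last (take ?p P) = P ! (?p - 1)"
    using is_path_take[OF P_is_path, of ?p] crowded_level_ge_1 by simp_all
  have "hd (take ?p P) = s" using crowded_level_ge_1 P_path by (simp add: st_path_def)
  have "set (take ?p P) \<inter> set Q = {}"
  proof (rule ccontr)
    assume "set (take ?p P) \<inter> set Q \<noteq> {}"
    then obtain w where "w \<in> set (take ?p P)" "w \<in> set Q" by blast
    moreover from this(1) obtain i where "i < length (take ?p P)" "w = take ?p P ! i"
      by (auto simp: in_set_conv_nth)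
    ultimately have "i < ?p" "P ! i \<in> set Q" by simp_all
    then show False using Q_upper depth_le_crowded_level[of i] by fastforce
  qed
  moreover have "(P ! (?p - 1), P ! ?p) \<in> E"
    using P_edge[of "?p - 1"] crowded_level_ge_1 crowded_level_less by simp
  ultimately have "is_path V E (take ?p P @ Q)"
    using pre Q by (intro is_path_append) auto
  moreover have "take ?p P \<noteq> []" "Q \<noteq> []"
    using crowded_level_ge_1 P_ne Q(1) by (auto simp: is_path_def)
  ultimately show ?thesis
    using \<open>hd (take ?p P) = s\<close> by (simp add: st_path_def)
qed

lemma reroute_through_upper_path:
  assumes Q: "is_path V E Q" "hd Q = P ! crowded_level" "\<forall>w\<in>set Q. crowded_level \<le> dist V E s w"
    and hit: "a < length Q" "j < length P" "Q ! a = P ! j"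
    and no_earlier_hit: "\<forall>b<a. \<forall>i. j < i \<and> i < length P \<longrightarrow> Q ! b \<noteq> P ! i"
  shows "\<exists>R. st_path V E s t R \<and> path_len R = crowded_level + a + (length P - Suc j)"
proof -
  let ?p = crowded_level
  let ?Q = "take (Suc a) Q"
  have "is_path V E ?Q" "hd ?Q = P ! ?p" "\<forall>w\<in>set ?Q. ?p \<le> dist V E s w"
    using Q is_path_take[OF Q(1), of "Suc a"] by (auto dest: in_set_takeD)
  moreover have "last ?Q = P ! j"
    using hit by (simp add: take_Suc_conv_app_nth)
  ultimately have A: "st_path V E s (P ! j) (take ?p P @ ?Q)"
    using prepend_geodesic_prefix by metis
  have "set ?Q \<inter> set (drop (Suc j) P) = {}"
  proof (rule ccontr)
    assume "set ?Q \<inter> set (drop (Suc j) P) \<noteq> {}"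
    then obtain w where w: "w \<in> set ?Q" "w \<in> set (drop (Suc j) P)" by blast
    from w(1) obtain b where "b < Suc a" "w = Q ! b"
      using hit(1) by (auto simp: in_set_conv_nth)
    then have b: "b \<le> a" "w = Q ! b" by simp_all
    from w(2) obtain n where "n < length P - Suc j" "w = P ! (Suc j + n)"
      by (auto simp: in_set_conv_nth)
    then have n: "Suc j + n < length P" "w = P ! (Suc j + n)" by simp_all
    show False
    proof (cases "b = a")
      case True
      then show False using n b hit P_nth_eq_iff by simp
    next
      case False
      then have "b < a" using b by simp
      then show False using no_earlier_hit[rule_format, of b "Suc j + n"] n b by simp
    qed
  qed
  moreover have "set (take ?p P) \<inter> set (drop (Suc j) P) = {}"
  proof -
    have "?p \<le> j"
      using Q(3) hit depth_le_crowded_level[of j] nth_mem[OF hit(1)] by force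
    then show ?thesis
      using P_is_path by (intro set_take_disj_set_drop_if_distinct) (auto simp: is_path_def)
  qed
  ultimately have "set (take ?p P @ ?Q) \<inter> set (drop (Suc j) P) = {}" by auto
  moreover have "path_len (take ?p P @ ?Q) = ?p + a"
    using crowded_level_less hit(1) by (simp add: path_len_def)
  ultimately show ?thesis
    using st_path_replace_prefix[OF P_path hit(2) A] by metis
qed

lemma dist_le_shortcut_len:
  assumes "crowded_level < iv" "iv < length P" "depth iv = crowded_level"
  shows "dist V E s t \<le> crowded_level + (length P - Suc iv)"
  using shortcut_to_crowded_level[OF assms] dist_le_path_len by metis

lemma shortcut_len_less_dist_add:
  assumes P_min: "\<And>q. st_path V E s t q \<Longrightarrow> dist V E s t + k \<le> path_len q \<Longrightarrow> path_len P \<le> path_len q"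
    and iv: "crowded_level < iv" "iv < length P" "depth iv = crowded_level"
  shows "crowded_level + (length P - Suc iv) < dist V E s t + k"
proof -
  obtain R where R: "st_path V E s t R" "path_len R = crowded_level + (length P - Suc iv)"
    using shortcut_to_crowded_level[OF iv] by blast
  moreover have "path_len R < path_len P" using R(2) iv by (simp add: path_len_def)
  ultimately show ?thesis using P_min[OF R(1)] by linarith
qed

lemma upper_path_avoids_tail:
  assumes P_min: "\<And>q. st_path V E s t q \<Longrightarrow> dist V E s t + k \<le> path_len q \<Longrightarrow> path_len P \<le> path_len q"
    and iv: "crowded_level < iv" "iv < length P" "depth iv = crowded_level"
    and Q: "is_path V E Q" "hd Q = P ! crowded_level" "last Q = P ! (crowded_level + k)"
      "path_len Q \<le> k" "\<forall>w\<in>set Q. crowded_level \<le> dist V E s w"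
    and Q_avoids: "\<And>j. crowded_level + k < j \<Longrightarrow> iv - k \<le> j \<Longrightarrow> j \<le> iv + 2 * k \<Longrightarrow>
      j < length P \<Longrightarrow> P ! j \<notin> set Q"
    and j0: "crowded_level + k < j0" "j0 < length P"
  shows "P ! j0 \<notin> set Q"
proof
  let ?p = crowded_level and ?hit = "\<lambda>b. \<exists>j. crowded_level + k < j \<and> j < length P \<and> Q ! b = P ! j"
  assume "P ! j0 \<in> set Q"
  then obtain b0 where b0: "b0 < length Q" "?hit b0" using j0 by (metis in_set_conv_nth)
  then obtain a where a: "?hit a" "\<forall>b<a. \<not> ?hit b" using exists_least_iff[of ?hit] by blast
  then obtain j where j: "?p + k < j" "j < length P" "Q ! a = P ! j" by blast
  have "a < length Q" using a(2) b0 by (meson le_less_trans not_less)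
  have first: "\<forall>b<a. \<forall>i. j < i \<and> i < length P \<longrightarrow> Q ! b \<noteq> P ! i"
    using a(2) j(1) by (meson less_trans)
  obtain R where R: "st_path V E s t R" "path_len R = ?p + a + (length P - Suc j)"
    using reroute_through_upper_path[OF Q(1,2,5) \<open>a < length Q\<close> j(2,3) first] by blast
  have "a \<noteq> length Q - 1"
  proof
    assume "a = length Q - 1"
    then have "P ! j = P ! (?p + k)" using Q(1,3) j(3) by (simp add: is_path_def last_conv_nth)
    then show False using P_nth_eq_iff j by simp
  qed
  then have "a < k" using \<open>a < length Q\<close> Q(4) by (simp add: path_len_def)
  have "P ! j \<in> set Q" using j(3) \<open>a < length Q\<close> nth_mem by metis
  then have "j < iv - k \<or> iv + 2 * k < j" using Q_avoids j(1,2) by fastforce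
  then show False
  proof
    assume "j < iv - k"
    then have "dist V E s t + k \<le> path_len R" "path_len R < path_len P"
      using R(2) dist_le_shortcut_len[OF iv] \<open>a < k\<close> j iv
      by (simp_all add: path_len_def)
    then show False using P_min[OF R(1)] by linarith
  next
    assume "iv + 2 * k < j"
    then have "path_len R < dist V E s t"
      using R(2) shortcut_len_less_dist_add[where k = k, OF P_min iv] \<open>a < k\<close> j(2) by linarith
    then show False using dist_le_path_len[OF R(1)] by linarith
  qed
qed

end

lemma st_path_upper_levels:
  assumes "st_path (\<Union>i\<in>{i. i \<ge> p}. level V E s i) (induced_edges E (\<Union>i\<in>{i. i \<ge> p}. level V E s i)) a b q"
  shows "st_path V E a b q" and "\<forall>w\<in>set q. p \<le> dist V E s w"
proof -
  have "(\<Union>i\<in>{i. i \<ge> p}. level V E s i) \<subseteq> V"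
    "induced_edges E (\<Union>i\<in>{i. i \<ge> p}. level V E s i) \<subseteq> E"
    by (auto simp: level_def induced_edges_def)
  then show "st_path V E a b q"
    using assms is_path_mono by (auto simp: st_path_def)
  show "\<forall>w\<in>set q. p \<le> dist V E s w"
    using assms by (auto simp: st_path_def is_path_def level_def)
qed

theorem lemma4:
  fixes V :: "'a set" and E :: "('a \<times> 'a) set" and s t :: 'a and k :: nat
    and P :: "'a list"
    and p iu iv ix iy iz k' k'' :: nat
  assumes finV: "finite V"
    and EV: "E \<subseteq> V \<times> V"
    and sV: "s \<in> V"
    and reach: "\<forall>w\<in>V. \<exists>q. st_path V E s w q"
    and tV: "t \<in> V"
    and k1: "k \<ge> 1"
    and no_len: "\<forall>l. k \<le> l \<and> l \<le> 2 * k - 1 \<longrightarrow>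
                   \<not> (\<exists>q. st_path V E s t q \<and> path_len q = dist V E s t + l)"
    and P_path: "st_path V E s t P"
    and P_long: "path_len P \<ge> dist V E s t + k"
    and P_min: "\<forall>q. st_path V E s t q \<and> path_len q \<ge> dist V E s t + k
                   \<longrightarrow> path_len P \<le> path_len q"
    and p_def: "p = (LEAST i. i \<ge> 1 \<and> card (level V E s i \<inter> set P) > 1)"
    and iu_def: "iu = (LEAST j. j < length P \<and> P ! j \<in> level V E s p)"
    and iv_def: "iv = (LEAST j. iu < j \<and> j < length P \<and> P ! j \<in> level V E s p)"
    and ix_def: "ix = iu + k"
    and k'_def: "k' = min (k + 1) (length (subpath P ix iv))"
    and iy_def: "iy = Suc iv - k'"
    and k''_def: "k'' = min (2 * k + 1) (length (subpath P iv (length P - 1)))"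
    and iz_def: "iz = iv + k'' - 1"
  shows "\<forall>P'. st_path (\<Union>i\<in>{i. i \<ge> p}. level V E s i)
                  (induced_edges E (\<Union>i\<in>{i. i \<ge> p}. level V E s i))
                  (P ! iu) (P ! ix) P'
           \<and> path_len P' \<le> k
           \<and> set P' \<inter> set (subpath P iy iz) = {}
           \<longrightarrow> set P' \<inter> set (subpath P ix iv) \<subseteq> {P ! ix}"
proof (intro allI impI, elim conjE)
  fix P'
  assume P'_upper: "st_path (\<Union>i\<in>{i. i \<ge> p}. level V E s i)
                (induced_edges E (\<Union>i\<in>{i. i \<ge> p}. level V E s i)) (P ! iu) (P ! ix) P'"
    and P'_len: "path_len P' \<le> k" and P'_disj: "set P' \<inter> set (subpath P iy iz) = {}"
  interpret nonshortest_path V E s t P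
    by unfold_locales (fact reach, fact P_path, use P_long k1 in linarith)
  have p: "p = crowded_level" using p_def by (simp only: crowded_level_def)
  have iu: "iu = p" using iu_def first_index_in_crowded_level p by simp
  have "iv = (LEAST j. crowded_level < j \<and> j < length P \<and> P ! j \<in> level V E s crowded_level)"
    using iv_def iu p by simp
  then have iv: "p < iv" "iv < length P" "depth iv = p"
    using LeastI_ex[OF later_index_in_crowded_level] p by (simp_all add: level_def)
  have P': "st_path V E (P ! p) (P ! ix) P'" "\<forall>w\<in>set P'. p \<le> dist V E s w"
    using st_path_upper_levels[OF P'_upper] iu by simp_all
  have middle_avoided: "P ! j \<notin> set P'"
    if "ix < j" "iv - k \<le> j" "j \<le> iv + 2 * k" "j < length P" for j
    using nth_in_subpath_window[OF iv(2) that] P'_disj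
    unfolding iy_def k'_def iz_def k''_def by blast
  have tail_avoided: "P ! j \<notin> set P'" if "ix < j" "j < length P" for j
    by (rule upper_path_avoids_tail[of k iv P' j])
      (use P_min iv P' P'_len middle_avoided that in \<open>simp_all add: st_path_def p iu ix_def\<close>)
  show "set P' \<inter> set (subpath P ix iv) \<subseteq> {P ! ix}"
  proof
    fix w assume "w \<in> set P' \<inter> set (subpath P ix iv)"
    then obtain n where "ix \<le> n" "n \<le> iv" "w = P ! n" "w \<in> set P'"
      using in_set_subpath[OF iv(2)] by blast
    then show "w \<in> {P ! ix}" using tail_avoided[of n] iv(2) by (cases "n = ix") auto
  qed
qed

end
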